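(* Fix a nonempty closed interval $I_\Lambda\subseteq[\Lambda_{\min},\Lambda_{\max}]$ with $0<\Lambda_{\min}\le\Lambda_{\max}$, and a set $\mathcal{P}=\{q\in\Delta_m:\ \|q-\hat p\|_1\le\varepsilon\}$ for some $\hat p\in\Delta_m$ and $\varepsilon\ge 0$, where $\Delta_m$ is the set of probability vectors on $\{1,\dots,m\}$. Let $\mathcal{C}$ be the set of admission-control CTMDPs $\mathcal{M}_{\Lambda,p(\cdot)}$ with $\Lambda\in I_\Lambda$ and $p(s)\in\mathcal{P}$ for every $s\in\{0,\dots,S\}$. Let $\widetilde{\mathcal{M}}=\mathcal{M}_{\tilde\Lambda,\tilde p(\cdot)}$, where $\tilde\Lambda=\max I_\Lambda$ and, for each state $s$, $\tilde p(s)$ is the lexicographic maximizer over $\mathcal{P}$ of the vector $(q^{(\sigma_s(1))},q^{(\sigma_s(2))},\dots,q^{(\sigma_s(m))})$, with $\sigma_s$ an ordering of the classes by non-increasing $r^{(i)}(s)$ (i.e. $\tilde p(s)$ first maximizes the probability of the highest-priority class in state $s$, then, subject to that, of the second, etc.). Then $\widetilde{\mathcal{M}}\in\mathcal{C}$ and its optimal long-run average reward is at least the optimal long-run average reward of every CTMDP in $\mathcal{C}$.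
   Context: Admission control to an $M/M/c/S$ queue: states $s\in\{0,1,\dots,S\}$ = number of jobs in the system; $c\ge1$ identical servers each of rate $\mu>0$, total service rate $\mu(s)=\min(s,c)\mu$ in state $s$. There are $m$ job classes; each class $i$ has a known expected reward $r^{(i)}(s)\in\mathbb{R}$ for admitting it in state $s$. For $\Lambda>0$ and probability vectors $p(s)=(p^{(1)}(s),\dots,p^{(m)}(s))$, the CTMDP $\mathcal{M}_{\Lambda,p(\cdot)}$ is the one where, in state $s$, class-$i$ jobs arrive as a Poisson stream of rate $\lambda^{(i)}(s)=\Lambda p^{(i)}(s)$; an action in state $s<S$ is a subset $a\subseteq\{1,\dots,m\}$ of classes to admit (in state $S$ nothing is admitted); under action $a$ the birth rate is $\sum_{i\in a}\lambda^{(i)}(s)$, the death rate is $\mu(s)$, and the reward rate is $\sum_{i\in a}\lambda^{(i)}(s)r^{(i)}(s)$. The long-run average reward of a stationary policy $\pi$ is $\rho^\pi=\lim_{T\to\infty}\frac1T\mathbb{E}\int_0^T R^\pi(s_t)\,dt$ with $R^\pi(s)$ the reward rate of the chosen action in state $s$; the optimal average reward is the supremum over stationary (possibly randomized) policies. *)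

theory Defs
  imports "HOL-Analysis.Analysis"
begin

text \<open>Admission control to an M/M/c/S queue. States are 0..S, job classes are 1..m.
  Rewards: r i s = expected reward for admitting a class-i job in state s.
  A CTMDP M(Lam, p) is given by Lam > 0 and p :: nat => nat => real,
  where p s i is the probability of class i in state s.
  A stationary randomized policy d assigns to each state s < S a probability
  distribution d s over actions, i.e. subsets of {1..m}.\<close>

definition prob_vec :: "nat \<Rightarrow> (nat \<Rightarrow> real) \<Rightarrow> bool" where
  "prob_vec m q \<longleftrightarrow> (\<forall>i\<in>{1..m}. 0 \<le> q i) \<and> (\<Sum>i=1..m. q i) = 1"

definition ball_set :: "nat \<Rightarrow> (nat \<Rightarrow> real) \<Rightarrow> real \<Rightarrow> (nat \<Rightarrow> real) set" where
  "ball_set m phat eps = {q. prob_vec m q \<and> (\<Sum>i=1..m. \<bar>q i - phat i\<bar>) \<le> eps}"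

definition valid_policy :: "nat \<Rightarrow> nat \<Rightarrow> (nat \<Rightarrow> nat set \<Rightarrow> real) \<Rightarrow> bool" where
  "valid_policy m S d \<longleftrightarrow>
     (\<forall>s<S. (\<forall>a. 0 \<le> d s a) \<and> (\<forall>a. d s a \<noteq> 0 \<longrightarrow> a \<subseteq> {1..m})
            \<and> (\<Sum>a\<in>Pow {1..m}. d s a) = 1)"

definition birth_rate :: "nat \<Rightarrow> nat \<Rightarrow> real \<Rightarrow> (nat \<Rightarrow> nat \<Rightarrow> real)
    \<Rightarrow> (nat \<Rightarrow> nat set \<Rightarrow> real) \<Rightarrow> nat \<Rightarrow> real" where
  "birth_rate m S Lam p d s =
     (if s < S then (\<Sum>a\<in>Pow {1..m}. d s a * (\<Sum>i\<in>a. Lam * p s i)) else 0)"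

definition death_rate :: "nat \<Rightarrow> real \<Rightarrow> nat \<Rightarrow> real" where
  "death_rate c mu s = real (min s c) * mu"

definition reward_rate :: "nat \<Rightarrow> nat \<Rightarrow> (nat \<Rightarrow> nat \<Rightarrow> real) \<Rightarrow> real \<Rightarrow> (nat \<Rightarrow> nat \<Rightarrow> real)
    \<Rightarrow> (nat \<Rightarrow> nat set \<Rightarrow> real) \<Rightarrow> nat \<Rightarrow> real" where
  "reward_rate m S r Lam p d s =
     (if s < S then (\<Sum>a\<in>Pow {1..m}. d s a * (\<Sum>i\<in>a. Lam * p s i * r i s)) else 0)"

definition generator :: "nat \<Rightarrow> nat \<Rightarrow> nat \<Rightarrow> real \<Rightarrow> real \<Rightarrow> (nat \<Rightarrow> nat \<Rightarrow> real)
    \<Rightarrow> (nat \<Rightarrow> nat set \<Rightarrow> real) \<Rightarrow> nat \<Rightarrow> nat \<Rightarrow> real" where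
  "generator m S c mu Lam p d i j =
     (if j = Suc i then birth_rate m S Lam p d i else 0)
   + (if Suc j = i then death_rate c mu i else 0)
   - (if j = i then birth_rate m S Lam p d i + death_rate c mu i else 0)"

fun mat_pow :: "nat \<Rightarrow> (nat \<Rightarrow> nat \<Rightarrow> real) \<Rightarrow> nat \<Rightarrow> nat \<Rightarrow> nat \<Rightarrow> real" where
  "mat_pow S Q 0 i j = (if i = j then 1 else 0)"
| "mat_pow S Q (Suc n) i j = (\<Sum>k\<le>S. mat_pow S Q n i k * Q k j)"

definition trans_prob :: "nat \<Rightarrow> (nat \<Rightarrow> nat \<Rightarrow> real) \<Rightarrow> real \<Rightarrow> nat \<Rightarrow> nat \<Rightarrow> real" where
  "trans_prob S Q t i j = (\<Sum>n. t ^ n / fact n * mat_pow S Q n i j)"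

definition avg_reward :: "nat \<Rightarrow> nat \<Rightarrow> nat \<Rightarrow> real \<Rightarrow> (nat \<Rightarrow> nat \<Rightarrow> real) \<Rightarrow> real
    \<Rightarrow> (nat \<Rightarrow> nat \<Rightarrow> real) \<Rightarrow> (nat \<Rightarrow> nat set \<Rightarrow> real) \<Rightarrow> nat \<Rightarrow> real" where
  "avg_reward m S c mu r Lam p d s0 =
     Lim at_top (\<lambda>T. (1 / T) * integral {0..T}
        (\<lambda>t. \<Sum>j\<le>S. trans_prob S (generator m S c mu Lam p d) t s0 j
                       * reward_rate m S r Lam p d j))"

definition opt_reward :: "nat \<Rightarrow> nat \<Rightarrow> nat \<Rightarrow> real \<Rightarrow> (nat \<Rightarrow> nat \<Rightarrow> real) \<Rightarrow> real
    \<Rightarrow> (nat \<Rightarrow> nat \<Rightarrow> real) \<Rightarrow> nat \<Rightarrow> real" where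
  "opt_reward m S c mu r Lam p s0 =
     (SUP d\<in>{d. valid_policy m S d}. avg_reward m S c mu r Lam p d s0)"

definition in_class :: "nat \<Rightarrow> nat \<Rightarrow> real set \<Rightarrow> (nat \<Rightarrow> real) set \<Rightarrow> real
    \<Rightarrow> (nat \<Rightarrow> nat \<Rightarrow> real) \<Rightarrow> bool" where
  "in_class m S I P Lam p \<longleftrightarrow> Lam \<in> I \<and> (\<forall>s\<le>S. p s \<in> P)"

definition lex_le :: "real list \<Rightarrow> real list \<Rightarrow> bool" where
  "lex_le xs ys \<longleftrightarrow> xs = ys \<or>
     (\<exists>k < length xs. take k xs = take k ys \<and> xs ! k < ys ! k)"

definition prio_vec :: "nat \<Rightarrow> (nat \<Rightarrow> nat) \<Rightarrow> (nat \<Rightarrow> real) \<Rightarrow> real list" where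
  "prio_vec m sg q = map (\<lambda>k. q (sg k)) [1..<m+1]"

definition lex_maximizer :: "nat \<Rightarrow> (nat \<Rightarrow> real) set \<Rightarrow> (nat \<Rightarrow> nat) \<Rightarrow> (nat \<Rightarrow> real) \<Rightarrow> bool" where
  "lex_maximizer m P sg q \<longleftrightarrow> q \<in> P \<and> (\<forall>q'\<in>P. lex_le (prio_vec m sg q') (prio_vec m sg q))"

definition p_tilde :: "nat \<Rightarrow> (nat \<Rightarrow> real) set \<Rightarrow> (nat \<Rightarrow> nat \<Rightarrow> nat) \<Rightarrow> nat \<Rightarrow> nat \<Rightarrow> real" where
  "p_tilde m P ord s = (SOME q. lex_maximizer m P (ord s) q)"

end

theory Submission
  imports Defs
begin

text \<open>For any stationary policy the CTMDP induces a finite birth--death chain whose long-run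
  average reward is the gain of its Poisson equation; so to compare two CTMDPs it suffices to
  turn every policy of one into a policy of the other that induces the same chain and a
  pointwise larger reward rate. The lexicographic maximizer of the \<open>\<ell>\<^sub>1\<close>-ball is computed
  explicitly: it shifts mass \<open>\<epsilon>/2\<close> greedily to the classes of highest priority, so its prefix
  sums in priority order dominate those of every member of the ball. Together with
  \<open>\<Lambda> \<le> max I\<^sub>\<Lambda>\<close>, the arrival rates of the worst-case-optimal CTMDP dominate those of any
  member of the class in prefix sums, so in every state the same total admission rate can be
  filled in priority order. By Abel summation against the non-increasing rewards this does
  not decrease the reward rate.\<close>

section \<open>Transition probabilities of a finite generator\<close>

lemma mat_pow_abs_le:
  fixes M :: "nat \<Rightarrow> nat \<Rightarrow> real"
  assumes "j \<le> S"
  shows "\<bar>mat_pow S M n i j\<bar> \<le> (1 + (\<Sum>k\<le>S. \<Sum>j\<le>S. \<bar>M k j\<bar>)) ^ n"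
  using assms
proof (induction n arbitrary: j)
  case 0
  then show ?case by simp
next
  case (Suc n)
  define C where "C = 1 + (\<Sum>k\<le>S. \<Sum>j\<le>S. \<bar>M k j\<bar>)"
  have "(\<Sum>k\<le>S. \<bar>M k j\<bar>) \<le> (\<Sum>k\<le>S. \<Sum>j\<le>S. \<bar>M k j\<bar>)"
    by (intro sum_mono member_le_sum) (use Suc.prems in auto)
  then have column: "(\<Sum>k\<le>S. \<bar>M k j\<bar>) \<le> C"
    unfolding C_def by simp
  have "\<bar>mat_pow S M (Suc n) i j\<bar> \<le> (\<Sum>k\<le>S. \<bar>mat_pow S M n i k\<bar> * \<bar>M k j\<bar>)"
    by (simp add: abs_mult[symmetric])
  also have "\<dots> \<le> (\<Sum>k\<le>S. C ^ n * \<bar>M k j\<bar>)"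
    by (intro sum_mono mult_right_mono) (auto intro: Suc.IH simp: C_def)
  also have "\<dots> = C ^ n * (\<Sum>k\<le>S. \<bar>M k j\<bar>)"
    by (simp add: sum_distrib_left)
  also have "\<dots> \<le> C ^ n * C"
    by (intro mult_left_mono column) (simp add: C_def sum_nonneg)
  finally show ?case
    by (simp add: C_def mult.commute)
qed

lemma summable_mat_pow_powser:
  fixes M :: "nat \<Rightarrow> nat \<Rightarrow> real"
  assumes "j \<le> S"
  shows "summable (\<lambda>n. mat_pow S M n i j / fact n * t ^ n)"
proof (rule summable_comparison_test'[OF summable_exp, where N = 0])
  define C where "C = 1 + (\<Sum>k\<le>S. \<Sum>j\<le>S. \<bar>M k j\<bar>)"
  fix n
  have "norm (mat_pow S M n i j / fact n * t ^ n) = \<bar>mat_pow S M n i j\<bar> * \<bar>t\<bar> ^ n * inverse (fact n)"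
    by (simp add: abs_mult power_abs divide_inverse)
  also have "\<dots> \<le> C ^ n * \<bar>t\<bar> ^ n * inverse (fact n)"
    using mat_pow_abs_le[OF assms] by (intro mult_right_mono) (auto simp: C_def)
  finally show "norm (mat_pow S M n i j / fact n * t ^ n) \<le> inverse (fact n) * (C * \<bar>t\<bar>) ^ n"
    by (simp add: power_mult_distrib mult.commute)
qed

lemma trans_prob_powser: "trans_prob S M t i j = (\<Sum>n. mat_pow S M n i j / fact n * t ^ n)"
  unfolding trans_prob_def by (simp add: field_simps)

lemma trans_prob_0: "trans_prob S M 0 i j = (if i = j then 1 else 0)"
  unfolding trans_prob_powser by (subst powser_zero) simp

lemma trans_prob_has_derivative:
  fixes M :: "nat \<Rightarrow> nat \<Rightarrow> real"
  assumes "j \<le> S"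
  shows "((\<lambda>t. trans_prob S M t i j) has_real_derivative
           (\<Sum>k\<le>S. trans_prob S M t i k * M k j)) (at t)"
proof -
  let ?a = "\<lambda>j n. mat_pow S M n i j / fact n"
  have "((\<lambda>t. \<Sum>n. ?a j n * t ^ n) has_real_derivative (\<Sum>n. diffs (?a j) n * t ^ n)) (at t)"
    by (rule termdiffs_strong_converges_everywhere) (rule summable_mat_pow_powser[OF assms])
  moreover have "diffs (?a j) n * t ^ n = (\<Sum>k\<le>S. ?a k n * t ^ n * M k j)" for n
  proof -
    have "real (Suc n) / fact (Suc n) = 1 / fact n"
      by (simp add: divide_simps del: of_nat_Suc)
    then have "diffs (?a j) n = mat_pow S M (Suc n) i j / fact n"
      unfolding diffs_def by (simp add: divide_simps del: of_nat_Suc)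
    then show ?thesis
      by (simp add: sum_distrib_left sum_distrib_right sum_divide_distrib field_simps)
  qed
  moreover have "(\<Sum>n. \<Sum>k\<le>S. ?a k n * t ^ n * M k j) = (\<Sum>k\<le>S. trans_prob S M t i k * M k j)"
  proof -
    have "(\<Sum>n. \<Sum>k\<le>S. ?a k n * t ^ n * M k j) = (\<Sum>k\<le>S. \<Sum>n. ?a k n * t ^ n * M k j)"
      by (intro suminf_sum summable_mult2 summable_mat_pow_powser) simp
    also have "\<dots> = (\<Sum>k\<le>S. trans_prob S M t i k * M k j)"
      unfolding trans_prob_powser
      by (rule sum.cong[OF refl], rule suminf_mult2[symmetric], rule summable_mat_pow_powser) simp
    finally show ?thesis .
  qed
  ultimately show ?thesis
    unfolding trans_prob_powser by simp
qed

lemma trans_prob_nonneg_of_nonneg: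
  fixes M :: "nat \<Rightarrow> nat \<Rightarrow> real"
  assumes "\<And>k j. k \<le> S \<Longrightarrow> j \<le> S \<Longrightarrow> 0 \<le> M k j" and "j \<le> S" and "0 \<le> t"
  shows "0 \<le> trans_prob S M t i j"
proof -
  have "0 \<le> mat_pow S M n i j" if "j \<le> S" for n j
    using that by (induction n arbitrary: j) (auto intro!: sum_nonneg mult_nonneg_nonneg simp: assms(1))
  then show ?thesis
    unfolding trans_prob_powser using assms by (intro suminf_nonneg summable_mat_pow_powser) auto
qed

text \<open>Uniqueness for the linear system \<open>z' = z A\<close>: the energy \<open>\<Sum>\<^sub>j z\<^sub>j\<^sup>2\<close> grows at most
  exponentially, by Gronwall.\<close>
lemma linear_ode_zero_unique:
  fixes z :: "real \<Rightarrow> nat \<Rightarrow> real" and A :: "nat \<Rightarrow> nat \<Rightarrow> real"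
  assumes deriv: "\<And>j t. j \<le> S \<Longrightarrow> ((\<lambda>t. z t j) has_real_derivative (\<Sum>k\<le>S. z t k * A k j)) (at t)"
    and init: "\<And>j. j \<le> S \<Longrightarrow> z 0 j = 0" and "0 \<le> t" and "j \<le> S"
  shows "z t j = 0"
proof -
  define K where "K = (\<Sum>k\<le>S. \<Sum>j\<le>S. \<bar>A k j\<bar>)"
  define E where "E t = (\<Sum>j\<le>S. (z t j)\<^sup>2)" for t
  define E' where "E' t = (\<Sum>j\<le>S. 2 * z t j * (\<Sum>k\<le>S. z t k * A k j))" for t
  have E_deriv: "(E has_real_derivative E' x) (at x)" for x
    unfolding E_def E'_def
    by (rule DERIV_sum, rule DERIV_cong[OF DERIV_power[OF deriv, where n = 2]]) auto
  have coord_le: "(z x j)\<^sup>2 \<le> E x" if "j \<le> S" for x j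
    unfolding E_def by (rule member_le_sum[where f = "\<lambda>j. (z x j)\<^sup>2"]) (use that in auto)
  have E'_le: "E' x \<le> 2 * K * E x" for x
  proof -
    have "z x j * (z x k * A k j) \<le> \<bar>A k j\<bar> * E x" if "j \<le> S" "k \<le> S" for j k
    proof -
      have "z x j * (z x k * A k j) \<le> \<bar>z x j\<bar> * \<bar>z x k\<bar> * \<bar>A k j\<bar>"
        by (metis abs_ge_self abs_mult mult.assoc)
      also have "\<dots> \<le> ((z x j)\<^sup>2 + (z x k)\<^sup>2) / 2 * \<bar>A k j\<bar>"
      proof (rule mult_right_mono)
        have "0 \<le> (\<bar>z x j\<bar> - \<bar>z x k\<bar>)\<^sup>2" by simp
        then show "\<bar>z x j\<bar> * \<bar>z x k\<bar> \<le> ((z x j)\<^sup>2 + (z x k)\<^sup>2) / 2"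
          by (simp add: power2_eq_square algebra_simps)
      qed simp
      also have "\<dots> \<le> E x * \<bar>A k j\<bar>"
        using coord_le[of j x] coord_le[of k x] that by (intro mult_right_mono) auto
      finally show ?thesis by (simp add: mult.commute)
    qed
    then have "E' x \<le> (\<Sum>j\<le>S. 2 * (\<Sum>k\<le>S. \<bar>A k j\<bar> * E x))"
      unfolding E'_def by (intro sum_mono) (auto simp: sum_distrib_left mult.assoc intro!: sum_mono)
    also have "\<dots> = 2 * E x * (\<Sum>j\<le>S. \<Sum>k\<le>S. \<bar>A k j\<bar>)"
      by (simp add: sum_distrib_left sum_distrib_right algebra_simps)
    also have "(\<Sum>j\<le>S. \<Sum>k\<le>S. \<bar>A k j\<bar>) = K"
      unfolding K_def by (rule sum.swap)
    finally show ?thesis by (simp add: algebra_simps)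
  qed
  define F where "F t = exp (- (2 * K) * t) * E t" for t
  have F_deriv: "(F has_real_derivative exp (- (2 * K) * x) * (E' x - 2 * K * E x)) (at x)" for x
    unfolding F_def by (auto intro!: derivative_eq_intros E_deriv simp: algebra_simps)
  have "F t \<le> F 0"
    by (rule DERIV_nonpos_imp_nonincreasing[OF \<open>0 \<le> t\<close>])
       (use F_deriv E'_le in \<open>auto intro!: exI simp: mult_le_0_iff\<close>)
  moreover have "F 0 = 0"
    unfolding F_def E_def using init by simp
  moreover have "0 \<le> E t"
    unfolding E_def by (simp add: sum_nonneg)
  ultimately have "E t = 0"
    unfolding F_def by (metis exp_gt_zero mult_le_0_iff not_le order_antisym)
  then show ?thesis
    using coord_le[OF \<open>j \<le> S\<close>, of t] by simp
qed

text \<open>For a Metzler matrix \<open>Q\<close>, the shift \<open>N = Q + q I\<close> is nonnegative and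
  \<open>exp (t Q) = exp (-q t) exp (t N)\<close>; the identity is proved through uniqueness for the
  forward equation.\<close>
lemma trans_prob_nonneg:
  fixes Q :: "nat \<Rightarrow> nat \<Rightarrow> real"
  assumes Q_offdiag: "\<And>k j. k \<le> S \<Longrightarrow> j \<le> S \<Longrightarrow> k \<noteq> j \<Longrightarrow> 0 \<le> Q k j"
    and "0 \<le> t" and "j \<le> S"
  shows "0 \<le> trans_prob S Q t i j"
proof -
  define q where "q = (\<Sum>k\<le>S. \<bar>Q k k\<bar>)"
  define N where "N k j = Q k j + (if k = j then q else 0)" for k j
  have N_nonneg: "0 \<le> N k j" if "k \<le> S" "j \<le> S" for k j
  proof (cases "k = j")
    case True
    have "\<bar>Q k k\<bar> \<le> q"
      unfolding q_def by (rule member_le_sum[where f = "\<lambda>k. \<bar>Q k k\<bar>"]) (use that in auto)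
    then show ?thesis using True unfolding N_def by simp
  qed (use Q_offdiag that in \<open>simp add: N_def\<close>)
  define P where "P t j = exp (- q * t) * trans_prob S N t i j" for t j
  have P_deriv: "((\<lambda>t. P t j) has_real_derivative (\<Sum>k\<le>S. P t k * Q k j)) (at t)"
    if "j \<le> S" for t j
  proof -
    have "(\<Sum>k\<le>S. trans_prob S N t i k * N k j)
        = (\<Sum>k\<le>S. trans_prob S N t i k * Q k j) + trans_prob S N t i j * q"
      unfolding N_def using that
      by (simp add: distrib_left sum.distrib if_distrib[of "\<lambda>x. _ * x"] cong: if_cong)
    then show ?thesis
      unfolding P_def
      by (intro DERIV_cong[OF DERIV_mult[OF _ trans_prob_has_derivative[OF that]]])
         (auto intro!: derivative_eq_intros simp: algebra_simps sum_distrib_left)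
  qed
  have "trans_prob S Q t i j - P t j = 0"
  proof (rule linear_ode_zero_unique[OF _ _ \<open>0 \<le> t\<close> \<open>j \<le> S\<close>])
    show "((\<lambda>t. trans_prob S Q t i j - P t j) has_real_derivative
           (\<Sum>k\<le>S. (trans_prob S Q t i k - P t k) * Q k j)) (at t)" if "j \<le> S" for j t
      by (rule DERIV_cong[OF DERIV_diff[OF trans_prob_has_derivative[OF that] P_deriv[OF that]]])
         (simp add: algebra_simps sum_subtractf)
  qed (simp add: P_def trans_prob_0)
  moreover have "0 \<le> P t j"
    unfolding P_def using N_nonneg assms(2,3) by (intro mult_nonneg_nonneg trans_prob_nonneg_of_nonneg) auto
  ultimately show ?thesis by simp
qed

lemma trans_prob_row_sum:
  fixes Q :: "nat \<Rightarrow> nat \<Rightarrow> real"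
  assumes Q_row: "\<And>k. k \<le> S \<Longrightarrow> (\<Sum>j\<le>S. Q k j) = 0" and "i \<le> S"
  shows "(\<Sum>j\<le>S. trans_prob S Q t i j) = 1"
proof -
  have "((\<lambda>t. \<Sum>j\<le>S. trans_prob S Q t i j) has_real_derivative 0) (at x)" for x
  proof -
    have "(\<Sum>j\<le>S. \<Sum>k\<le>S. trans_prob S Q x i k * Q k j) = 0"
      by (subst sum.swap) (simp add: sum_distrib_left[symmetric] Q_row)
    then show ?thesis
      by (intro DERIV_cong[OF DERIV_sum[OF trans_prob_has_derivative]]) auto
  qed
  then have "(\<Sum>j\<le>S. trans_prob S Q t i j) = (\<Sum>j\<le>S. trans_prob S Q 0 i j)"
    by (intro DERIV_isconst_all) auto
  also have "\<dots> = 1"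
    using \<open>i \<le> S\<close> by (simp add: trans_prob_0)
  finally show ?thesis .
qed

lemma trans_prob_le_1:
  fixes Q :: "nat \<Rightarrow> nat \<Rightarrow> real"
  assumes "\<And>k j. k \<le> S \<Longrightarrow> j \<le> S \<Longrightarrow> k \<noteq> j \<Longrightarrow> 0 \<le> Q k j"
    and "\<And>k. k \<le> S \<Longrightarrow> (\<Sum>j\<le>S. Q k j) = 0" and "i \<le> S" and "j \<le> S" and "0 \<le> t"
  shows "trans_prob S Q t i j \<le> 1"
proof -
  have "trans_prob S Q t i j \<le> (\<Sum>j\<le>S. trans_prob S Q t i j)"
    by (rule member_le_sum) (use assms in \<open>auto intro: trans_prob_nonneg\<close>)
  then show ?thesis
    using trans_prob_row_sum[OF assms(2,3)] by simp
qed

section \<open>Long-run averages and the Poisson equation\<close>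

text \<open>If \<open>Q h = R - g\<close> (the Poisson equation with gain \<open>g\<close> and bias \<open>h\<close>), then
  \<open>v t + g t\<close> with \<open>v t = (P\<^sub>t h) s\<^sub>0\<close> is a primitive of the expected reward rate.\<close>
lemma expected_reward_has_integral:
  fixes Q :: "nat \<Rightarrow> nat \<Rightarrow> real"
  assumes Q_row: "\<And>k. k \<le> S \<Longrightarrow> (\<Sum>j\<le>S. Q k j) = 0" and "s0 \<le> S"
    and poisson: "\<And>i. i \<le> S \<Longrightarrow> (\<Sum>j\<le>S. Q i j * h j) = R i - g" and "0 \<le> T"
  shows "((\<lambda>t. \<Sum>j\<le>S. trans_prob S Q t s0 j * R j) has_integral
          (\<Sum>j\<le>S. trans_prob S Q T s0 j * h j) - (\<Sum>j\<le>S. trans_prob S Q 0 s0 j * h j) + g * T) {0..T}"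
proof -
  define V where "V t = (\<Sum>j\<le>S. trans_prob S Q t s0 j * h j) + g * t" for t
  have V_deriv: "(V has_real_derivative (\<Sum>j\<le>S. trans_prob S Q t s0 j * R j)) (at t)" for t
  proof -
    have "(V has_real_derivative (\<Sum>j\<le>S. (\<Sum>k\<le>S. trans_prob S Q t s0 k * Q k j) * h j) + g) (at t)"
      unfolding V_def
      by (rule DERIV_add, rule DERIV_sum, rule DERIV_cmult_right, rule trans_prob_has_derivative)
         (auto intro!: derivative_eq_intros)
    moreover have "(\<Sum>j\<le>S. (\<Sum>k\<le>S. trans_prob S Q t s0 k * Q k j) * h j)
        = (\<Sum>k\<le>S. trans_prob S Q t s0 k * (\<Sum>j\<le>S. Q k j * h j))"
      by (simp add: sum_distrib_right sum_distrib_left mult.assoc) (rule sum.swap)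
    also have "\<dots> = (\<Sum>k\<le>S. trans_prob S Q t s0 k * (R k - g))"
      by (rule sum.cong) (simp_all add: poisson)
    also have "\<dots> = (\<Sum>k\<le>S. trans_prob S Q t s0 k * R k) - g * (\<Sum>k\<le>S. trans_prob S Q t s0 k)"
      by (simp add: left_diff_distrib sum_subtractf sum_distrib_left mult.commute)
    also have "\<dots> = (\<Sum>k\<le>S. trans_prob S Q t s0 k * R k) - g"
      by (simp add: trans_prob_row_sum[OF Q_row \<open>s0 \<le> S\<close>])
    ultimately show ?thesis by simp
  qed
  have "((\<lambda>t. \<Sum>j\<le>S. trans_prob S Q t s0 j * R j) has_integral (V T - V 0)) {0..T}"
    by (rule fundamental_theorem_of_calculus[OF \<open>0 \<le> T\<close>])
       (auto intro!: has_field_derivative_at_within V_deriv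
         simp: has_real_derivative_iff_has_vector_derivative[symmetric])
  then show ?thesis
    unfolding V_def by (simp add: algebra_simps)
qed

lemma expected_reward_average_tendsto:
  fixes Q :: "nat \<Rightarrow> nat \<Rightarrow> real"
  assumes Q_offdiag: "\<And>k j. k \<le> S \<Longrightarrow> j \<le> S \<Longrightarrow> k \<noteq> j \<Longrightarrow> 0 \<le> Q k j"
    and Q_row: "\<And>k. k \<le> S \<Longrightarrow> (\<Sum>j\<le>S. Q k j) = 0" and "s0 \<le> S"
    and poisson: "\<And>i. i \<le> S \<Longrightarrow> (\<Sum>j\<le>S. Q i j * h j) = R i - g"
  shows "((\<lambda>T. (1 / T) * integral {0..T} (\<lambda>t. \<Sum>j\<le>S. trans_prob S Q t s0 j * R j)) \<longlongrightarrow> g) at_top"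
proof -
  define v where "v t = (\<Sum>j\<le>S. trans_prob S Q t s0 j * h j)" for t
  define H where "H = (\<Sum>j\<le>S. \<bar>h j\<bar>)"
  have v_bound: "\<bar>v t\<bar> \<le> H" if "0 \<le> t" for t
  proof -
    have "\<bar>v t\<bar> \<le> (\<Sum>j\<le>S. \<bar>trans_prob S Q t s0 j * h j\<bar>)"
      unfolding v_def by (rule sum_abs)
    also have "\<dots> \<le> H"
      unfolding H_def
      using trans_prob_nonneg[OF Q_offdiag that] trans_prob_le_1[OF Q_offdiag Q_row \<open>s0 \<le> S\<close> _ that]
      by (intro sum_mono) (simp add: abs_mult mult_left_le_one_le)
    finally show ?thesis .
  qed
  have "eventually (\<lambda>T. g + (v T - v 0) / T =
      (1 / T) * integral {0..T} (\<lambda>t. \<Sum>j\<le>S. trans_prob S Q t s0 j * R j)) at_top"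
    using eventually_gt_at_top[of "0::real"]
  proof eventually_elim
    case (elim T)
    have "integral {0..T} (\<lambda>t. \<Sum>j\<le>S. trans_prob S Q t s0 j * R j) = v T - v 0 + g * T"
      unfolding v_def
      by (rule integral_unique, rule expected_reward_has_integral[OF Q_row \<open>s0 \<le> S\<close> poisson])
         (use elim in auto)
    then show ?case
      using elim by (simp add: field_simps)
  qed
  moreover have "((\<lambda>T. (v T - v 0) / T) \<longlongrightarrow> 0) at_top"
  proof (rule Lim_null_comparison)
    show "eventually (\<lambda>T. norm ((v T - v 0) / T) \<le> 2 * H / T) at_top"
      using eventually_gt_at_top[of "0::real"]
    proof eventually_elim
      case (elim T)
      have "\<bar>v T - v 0\<bar> \<le> 2 * H"
        using v_bound[of T] v_bound[of 0] elim by simp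
      then show ?case
        using elim by (simp add: divide_right_mono)
    qed
    show "((\<lambda>T. 2 * H / T) \<longlongrightarrow> 0) at_top"
      by (rule tendsto_divide_0[OF tendsto_const filterlim_at_top_imp_at_infinity[OF filterlim_ident]])
  qed
  then have "((\<lambda>T. g + (v T - v 0) / T) \<longlongrightarrow> g + 0) at_top"
    by (rule tendsto_add[OF tendsto_const])
  ultimately show ?thesis
    by (simp add: tendsto_cong)
qed

lemma poisson_gain_mono:
  fixes Q :: "nat \<Rightarrow> nat \<Rightarrow> real"
  assumes Q_offdiag: "\<And>k j. k \<le> S \<Longrightarrow> j \<le> S \<Longrightarrow> k \<noteq> j \<Longrightarrow> 0 \<le> Q k j"
    and Q_row: "\<And>k. k \<le> S \<Longrightarrow> (\<Sum>j\<le>S. Q k j) = 0" and "s0 \<le> S"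
    and poisson1: "\<And>i. i \<le> S \<Longrightarrow> (\<Sum>j\<le>S. Q i j * h1 j) = R1 i - g1"
    and poisson2: "\<And>i. i \<le> S \<Longrightarrow> (\<Sum>j\<le>S. Q i j * h2 j) = R2 i - g2"
    and R_le: "\<And>i. i \<le> S \<Longrightarrow> R1 i \<le> R2 i"
  shows "g1 \<le> g2"
proof (rule tendsto_le[OF trivial_limit_at_top_linorder
      expected_reward_average_tendsto[OF Q_offdiag Q_row \<open>s0 \<le> S\<close> poisson2]
      expected_reward_average_tendsto[OF Q_offdiag Q_row \<open>s0 \<le> S\<close> poisson1]])
  let ?f = "\<lambda>R t. \<Sum>j\<le>S. trans_prob S Q t s0 j * R j"
  show "eventually (\<lambda>T. (1 / T) * integral {0..T} (?f R1) \<le> (1 / T) * integral {0..T} (?f R2)) at_top"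
    using eventually_gt_at_top[of "0::real"]
  proof eventually_elim
    case (elim T)
    have "?f R1 integrable_on {0..T}"
      by (rule has_integral_integrable, rule expected_reward_has_integral[OF Q_row \<open>s0 \<le> S\<close> poisson1])
         (use elim in auto)
    moreover have "?f R2 integrable_on {0..T}"
      by (rule has_integral_integrable, rule expected_reward_has_integral[OF Q_row \<open>s0 \<le> S\<close> poisson2])
         (use elim in auto)
    ultimately have "integral {0..T} (?f R1) \<le> integral {0..T} (?f R2)"
      by (rule integral_le) (auto intro!: sum_mono mult_left_mono R_le trans_prob_nonneg[OF Q_offdiag])
    then show ?case
      using elim by (simp add: divide_right_mono)
  qed
qed

section \<open>The birth--death chain of a policy\<close>

lemma generator_apply:
  assumes "k \<le> S"
  shows "(\<Sum>j\<le>S. generator m S c mu Lam p d k j * h j)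
     = birth_rate m S Lam p d k * (h (Suc k) - h k) + death_rate c mu k * (h (k - 1) - h k)"
proof -
  let ?b = "birth_rate m S Lam p d k" and ?d = "death_rate c mu k"
  have "(\<Sum>j\<le>S. generator m S c mu Lam p d k j * h j)
     = (\<Sum>j\<le>S. if j = Suc k then ?b * h j else 0) + (\<Sum>j\<le>S. if Suc j = k then ?d * h j else 0)
     - (\<Sum>j\<le>S. if j = k then (?b + ?d) * h j else 0)"
    unfolding sum.distrib[symmetric] sum_subtractf[symmetric]
    by (rule sum.cong) (simp_all add: generator_def algebra_simps)
  also have "(\<Sum>j\<le>S. if j = Suc k then ?b * h j else 0) = ?b * h (Suc k)"
  proof (cases "k = S")
    case True
    have "birth_rate m S Lam p d S = 0"
      by (simp add: birth_rate_def)
    then show ?thesis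
      using True by simp
  qed (use \<open>k \<le> S\<close> in simp)
  also have "(\<Sum>j\<le>S. if Suc j = k then ?d * h j else 0) = ?d * h (k - 1)"
  proof (cases k)
    case (Suc k')
    then have "(\<Sum>j\<le>S. if Suc j = k then ?d * h j else 0) = (\<Sum>j\<le>S. if j = k' then ?d * h j else 0)"
      by (intro sum.cong) auto
    then show ?thesis
      using \<open>k \<le> S\<close> Suc by simp
  qed (simp add: death_rate_def)
  also have "(\<Sum>j\<le>S. if j = k then (?b + ?d) * h j else 0) = (?b + ?d) * h k"
    using \<open>k \<le> S\<close> by simp
  finally show ?thesis
    by (simp add: algebra_simps)
qed

text \<open>\<open>poisson_increment be de R g S n\<close> is the increment \<open>h (S + 1 - n) - h (S - n)\<close> of the
  bias of a birth--death chain with gain \<open>g\<close>, computed downwards from the top state \<open>S\<close>.\<close>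
fun poisson_increment :: "(nat \<Rightarrow> real) \<Rightarrow> (nat \<Rightarrow> real) \<Rightarrow> (nat \<Rightarrow> real) \<Rightarrow> real \<Rightarrow> nat \<Rightarrow> nat \<Rightarrow> real"
  where
    "poisson_increment be de R g S 0 = 0"
  | "poisson_increment be de R g S (Suc n) =
       (be (S - n) * poisson_increment be de R g S n - R (S - n) + g) / de (S - n)"

lemma poisson_increment_affine:
  "poisson_increment be de R g S n
     = poisson_increment be de R 0 S n + g * poisson_increment be de (\<lambda>_. 0) 1 S n"
  by (induction n) (simp_all add: field_simps add_divide_distrib diff_divide_distrib)

lemma poisson_increment_nonneg:
  "(\<And>k. 0 \<le> be k) \<Longrightarrow> (\<And>k. 0 \<le> de k) \<Longrightarrow> 0 \<le> poisson_increment be de (\<lambda>_. 0) 1 S n"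
  by (induction n) simp_all

text \<open>The equations in states \<open>S, \<dots>, 1\<close> determine the increments of \<open>h\<close> for a given \<open>g\<close>;
  since they depend affinely on \<open>g\<close> with nonnegative slope, the equation in state \<open>0\<close>
  can then be solved for \<open>g\<close>.\<close>
lemma birth_death_poisson_solvable:
  fixes be de R :: "nat \<Rightarrow> real"
  assumes be: "\<And>k. 0 \<le> be k" and de: "\<And>k. 1 \<le> k \<Longrightarrow> 0 < de k" and "de 0 = 0"
  shows "\<exists>g h. \<forall>i\<le>S. be i * (h (Suc i) - h i) + de i * (h (i - 1) - h i) = R i - g"
proof -
  have de_nonneg: "0 \<le> de k" for k
    using de[of k] \<open>de 0 = 0\<close> by (cases "k = 0") auto
  define a where "a = poisson_increment be de R 0 S S"
  define b where "b = poisson_increment be de (\<lambda>_. 0) 1 S S"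
  have "0 \<le> b"
    unfolding b_def by (rule poisson_increment_nonneg[OF be de_nonneg])
  then have den: "0 < 1 + be 0 * b"
    using be[of 0] by (simp add: add_pos_nonneg)
  define g where "g = (R 0 - be 0 * a) / (1 + be 0 * b)"
  define D where "D i = poisson_increment be de R g S (S + 1 - i)" for i
  define h where "h i = (\<Sum>k=1..i. D k)" for i
  have h_Suc: "h (Suc i) - h i = D (Suc i)" for i
    unfolding h_def by simp
  have "be i * (h (Suc i) - h i) + de i * (h (i - 1) - h i) = R i - g" if "i \<le> S" for i
  proof (cases i)
    case 0
    have "D 1 = a + g * b"
      unfolding D_def a_def b_def by (simp add: poisson_increment_affine[of _ _ R g])
    moreover have "be 0 * (a + g * b) = R 0 - g"
      using den unfolding g_def by (simp add: field_simps)
    ultimately show ?thesis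
      using 0 h_Suc[of 0] \<open>de 0 = 0\<close> by simp
  next
    case (Suc i')
    have "S + 1 - i = Suc (S - i)"
      using that by simp
    then have "D i = (be i * D (Suc i) - R i + g) / de i"
      unfolding D_def using that by simp
    then have "de i * D i = be i * D (Suc i) - R i + g"
      using de[of i] Suc by simp
    then show ?thesis
      using h_Suc[of i] h_Suc[of i'] Suc by (simp add: algebra_simps)
  qed
  then show ?thesis by blast
qed

definition admit_prob :: "nat \<Rightarrow> (nat \<Rightarrow> nat set \<Rightarrow> real) \<Rightarrow> nat \<Rightarrow> nat \<Rightarrow> real" where
  "admit_prob m d s i = (\<Sum>a\<in>Pow {1..m}. if i \<in> a then d s a else 0)"

lemma sum_Pow_mult_sum:
  fixes E :: "'a set \<Rightarrow> real" and f :: "'a \<Rightarrow> real"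
  assumes "finite A"
  shows "(\<Sum>a\<in>Pow A. E a * (\<Sum>i\<in>a. f i)) = (\<Sum>i\<in>A. f i * (\<Sum>a\<in>Pow A. if i \<in> a then E a else 0))"
proof -
  have "(\<Sum>a\<in>Pow A. E a * (\<Sum>i\<in>a. f i)) = (\<Sum>a\<in>Pow A. \<Sum>i\<in>A. if i \<in> a then E a * f i else 0)"
  proof (rule sum.cong[OF refl])
    fix a assume "a \<in> Pow A"
    then have "(\<Sum>i\<in>A. if i \<in> a then E a * f i else 0) = (\<Sum>i\<in>a. E a * f i)"
      using sum.inter_restrict[OF assms, of "\<lambda>i. E a * f i" a] by (simp add: Int_absorb1)
    then show "E a * (\<Sum>i\<in>a. f i) = (\<Sum>i\<in>A. if i \<in> a then E a * f i else 0)"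
      by (simp add: sum_distrib_left)
  qed
  also have "\<dots> = (\<Sum>i\<in>A. \<Sum>a\<in>Pow A. if i \<in> a then E a * f i else 0)"
    by (rule sum.swap)
  also have "\<dots> = (\<Sum>i\<in>A. f i * (\<Sum>a\<in>Pow A. if i \<in> a then E a else 0))"
    by (rule sum.cong[OF refl]) (simp add: sum_distrib_left if_distrib mult.commute cong: if_cong)
  finally show ?thesis .
qed

lemma birth_rate_eq_admit_prob:
  "birth_rate m S Lam p d s = (if s < S then (\<Sum>i=1..m. Lam * p s i * admit_prob m d s i) else 0)"
  unfolding birth_rate_def admit_prob_def by (simp add: sum_Pow_mult_sum)

lemma reward_rate_eq_admit_prob:
  "reward_rate m S r Lam p d s
     = (if s < S then (\<Sum>i=1..m. Lam * p s i * r i s * admit_prob m d s i) else 0)"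
  unfolding reward_rate_def admit_prob_def by (simp add: sum_Pow_mult_sum)

lemma admit_prob_bounds:
  assumes "valid_policy m S d" and "s < S"
  shows "0 \<le> admit_prob m d s i" and "admit_prob m d s i \<le> 1"
proof -
  have d_nonneg: "0 \<le> d s a" for a
    using assms unfolding valid_policy_def by blast
  show "0 \<le> admit_prob m d s i"
    unfolding admit_prob_def by (rule sum_nonneg) (simp add: d_nonneg)
  have "admit_prob m d s i \<le> (\<Sum>a\<in>Pow {1..m}. d s a)"
    unfolding admit_prob_def by (rule sum_mono) (simp add: d_nonneg)
  also have "\<dots> = 1"
    using assms unfolding valid_policy_def by blast
  finally show "admit_prob m d s i \<le> 1" .
qed

lemma birth_rate_nonneg:
  assumes "valid_policy m S d" and "0 \<le> Lam" and "\<And>s i. s < S \<Longrightarrow> i \<in> {1..m} \<Longrightarrow> 0 \<le> p s i"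
  shows "0 \<le> birth_rate m S Lam p d s"
  using assms admit_prob_bounds(1)[OF assms(1)]
  by (auto simp: birth_rate_eq_admit_prob intro!: sum_nonneg mult_nonneg_nonneg)

lemma generator_offdiag_nonneg:
  assumes "\<And>s. 0 \<le> birth_rate m S Lam p d s" and "0 < mu" and "k \<noteq> j"
  shows "0 \<le> generator m S c mu Lam p d k j"
  using assms(1)[of k] assms(2,3) by (simp add: generator_def death_rate_def)

lemma generator_row_sum: "k \<le> S \<Longrightarrow> (\<Sum>j\<le>S. generator m S c mu Lam p d k j) = 0"
  using generator_apply[of k S m c mu Lam p d "\<lambda>_. 1"] by simp

lemma generator_poisson_solvable:
  assumes "\<And>s. 0 \<le> birth_rate m S Lam p d s" and "1 \<le> c" and "0 < mu"
  shows "\<exists>g h. \<forall>i\<le>S. (\<Sum>j\<le>S. generator m S c mu Lam p d i j * h j) = R i - g"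
  using birth_death_poisson_solvable[of "birth_rate m S Lam p d" "death_rate c mu" S R] assms
  by (simp add: generator_apply death_rate_def)

lemma avg_reward_eq_gain:
  assumes "\<And>s. 0 \<le> birth_rate m S Lam p d s" and "0 < mu" and "s0 \<le> S"
    and "\<And>i. i \<le> S \<Longrightarrow>
      (\<Sum>j\<le>S. generator m S c mu Lam p d i j * h j) = reward_rate m S r Lam p d i - g"
  shows "avg_reward m S c mu r Lam p d s0 = g"
  unfolding avg_reward_def
  using assms
  by (intro tendsto_Lim trivial_limit_at_top_linorder expected_reward_average_tendsto
      generator_offdiag_nonneg generator_row_sum) auto

lemma avg_reward_mono:
  assumes births: "\<And>s. 0 \<le> birth_rate m S Lam p d s" and "1 \<le> c" and "0 < mu" and "s0 \<le> S"
    and same_births: "birth_rate m S Lam' p' d' = birth_rate m S Lam p d"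
    and rewards: "\<And>i. i \<le> S \<Longrightarrow> reward_rate m S r Lam p d i \<le> reward_rate m S r Lam' p' d' i"
  shows "avg_reward m S c mu r Lam p d s0 \<le> avg_reward m S c mu r Lam' p' d' s0"
proof -
  let ?Q = "generator m S c mu Lam p d"
  have same_generator: "generator m S c mu Lam' p' d' = ?Q"
    by (intro ext) (simp add: generator_def same_births)
  obtain g h where poisson: "\<forall>i\<le>S. (\<Sum>j\<le>S. ?Q i j * h j) = reward_rate m S r Lam p d i - g"
    using generator_poisson_solvable[OF births \<open>1 \<le> c\<close> \<open>0 < mu\<close>] by blast
  obtain g' h' where poisson': "\<forall>i\<le>S. (\<Sum>j\<le>S. ?Q i j * h' j) = reward_rate m S r Lam' p' d' i - g'"
    using generator_poisson_solvable[OF births \<open>1 \<le> c\<close> \<open>0 < mu\<close>] by blast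
  have "avg_reward m S c mu r Lam p d s0 = g"
    using poisson by (intro avg_reward_eq_gain[OF births \<open>0 < mu\<close> \<open>s0 \<le> S\<close>]) auto
  moreover have "avg_reward m S c mu r Lam' p' d' s0 = g'"
    using poisson' births \<open>0 < mu\<close> \<open>s0 \<le> S\<close>
    by (intro avg_reward_eq_gain) (auto simp: same_births same_generator)
  moreover have "g \<le> g'"
    using poisson poisson' rewards \<open>0 < mu\<close> births \<open>s0 \<le> S\<close>
    by (intro poisson_gain_mono[of S ?Q s0 h "reward_rate m S r Lam p d" g h']
        generator_offdiag_nonneg generator_row_sum) auto
  ultimately show ?thesis by simp
qed

lemma avg_reward_le_bound:
  assumes births: "\<And>s. 0 \<le> birth_rate m S Lam p d s" and "1 \<le> c" and "0 < mu" and "s0 \<le> S"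
    and bound: "\<And>i. i \<le> S \<Longrightarrow> reward_rate m S r Lam p d i \<le> K"
  shows "avg_reward m S c mu r Lam p d s0 \<le> K"
proof -
  let ?Q = "generator m S c mu Lam p d"
  obtain g h where poisson: "\<forall>i\<le>S. (\<Sum>j\<le>S. ?Q i j * h j) = reward_rate m S r Lam p d i - g"
    using generator_poisson_solvable[OF births \<open>1 \<le> c\<close> \<open>0 < mu\<close>] by blast
  have "avg_reward m S c mu r Lam p d s0 = g"
    using poisson by (intro avg_reward_eq_gain[OF births \<open>0 < mu\<close> \<open>s0 \<le> S\<close>]) auto
  moreover have "g \<le> K"
    using poisson bound \<open>0 < mu\<close> births \<open>s0 \<le> S\<close>
    by (intro poisson_gain_mono[of S ?Q s0 h "reward_rate m S r Lam p d" g "\<lambda>_. 0" "\<lambda>_. K"]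
        generator_offdiag_nonneg generator_row_sum) auto
  ultimately show ?thesis by simp
qed

section \<open>The lexicographic maximizer of an \<open>\<ell>\<^sub>1\<close>-ball of distributions\<close>

lemma lex_le_antisym:
  assumes "lex_le xs ys" and "lex_le ys xs" and "length xs = length ys"
  shows "xs = ys"
proof (rule ccontr)
  assume "xs \<noteq> ys"
  then obtain k k' where k: "take k xs = take k ys" "xs ! k < ys ! k"
    and k': "take k' ys = take k' xs" "ys ! k' < xs ! k'"
    using assms(1,2) unfolding lex_le_def by blast
  have nth_eq: "xs ! i = ys ! i" if "take n xs = take n ys" "i < n" for i n
    using arg_cong[OF that(1), of "\<lambda>zs. zs ! i"] that(2) by simp
  show False
    using k k' nth_eq[OF k(1), of k'] nth_eq[OF k'(1)[symmetric], of k]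
    by (cases k k' rule: linorder_cases) auto
qed

lemma prio_vec_length: "length (prio_vec m sg q) = m"
  unfolding prio_vec_def by simp

lemma prio_vec_nth: "k < m \<Longrightarrow> prio_vec m sg q ! k = q (sg (Suc k))"
  unfolding prio_vec_def by (simp add: nth_map del: upt_Suc)

lemma take_prio_vec: "n \<le> m \<Longrightarrow> take n (prio_vec m sg q) = map (\<lambda>l. q (sg l)) [1..<Suc n]"
  unfolding prio_vec_def by (simp add: take_map take_upt del: upt_Suc)

lemma sum_split_at:
  fixes f :: "nat \<Rightarrow> real"
  assumes "j \<le> m"
  shows "(\<Sum>l=1..m. f l) = (\<Sum>l=1..j. f l) + (\<Sum>l=Suc j..m. f l)"
  using sum.ub_add_nat[of 1 j f "m - j"] assms by simp

text \<open>Moving mass \<open>x\<close> into the first \<open>j\<close> coordinates costs \<open>2 x\<close> in \<open>\<ell>\<^sub>1\<close>-distance.\<close>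
lemma ball_set_prefix_sum_le:
  assumes sg: "bij_betw sg {1..m} {1..m}" and "q \<in> ball_set m phat eps" and "prob_vec m phat"
    and "j \<le> m"
  shows "(\<Sum>l=1..j. q (sg l)) \<le> 1"
    and "(\<Sum>l=1..j. q (sg l)) \<le> (\<Sum>l=1..j. phat (sg l)) + eps / 2"
proof -
  have reindex: "(\<Sum>i=1..m. f i) = (\<Sum>l=1..m. f (sg l))" for f :: "nat \<Rightarrow> real"
    by (rule sum.reindex_bij_betw[OF sg, symmetric])
  have q_nonneg: "0 \<le> q (sg l)" if "l \<in> {1..m}" for l
    using assms(2) bij_betw_apply[OF sg that] unfolding ball_set_def prob_vec_def by blast
  have q_sum: "(\<Sum>l=1..m. q (sg l)) = 1" and phat_sum: "(\<Sum>l=1..m. phat (sg l)) = 1"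
    and dist: "(\<Sum>l=1..m. \<bar>q (sg l) - phat (sg l)\<bar>) \<le> eps"
    using assms(2,3) reindex[of q] reindex[of phat] reindex[of "\<lambda>i. \<bar>q i - phat i\<bar>"]
    unfolding ball_set_def prob_vec_def by auto
  have "0 \<le> (\<Sum>l=Suc j..m. q (sg l))"
    by (rule sum_nonneg) (use q_nonneg in auto)
  then show "(\<Sum>l=1..j. q (sg l)) \<le> 1"
    using sum_split_at[OF \<open>j \<le> m\<close>, of "\<lambda>l. q (sg l)"] q_sum by simp
  define X where "X = (\<Sum>l=1..j. q (sg l) - phat (sg l))"
  define Y where "Y = (\<Sum>l=Suc j..m. q (sg l) - phat (sg l))"
  have "X + Y = 0"
    using sum_split_at[OF \<open>j \<le> m\<close>, of "\<lambda>l. q (sg l) - phat (sg l)"] q_sum phat_sum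
    unfolding X_def Y_def by (simp add: sum_subtractf)
  moreover have "X \<le> (\<Sum>l=1..j. \<bar>q (sg l) - phat (sg l)\<bar>)"
    unfolding X_def by (rule sum_mono) simp
  moreover have "- Y \<le> (\<Sum>l=Suc j..m. \<bar>q (sg l) - phat (sg l)\<bar>)"
    unfolding Y_def sum_negf[symmetric] by (rule sum_mono) simp
  ultimately have "X \<le> eps / 2"
    using sum_split_at[OF \<open>j \<le> m\<close>, of "\<lambda>l. \<bar>q (sg l) - phat (sg l)\<bar>"] dist by simp
  then show "(\<Sum>l=1..j. q (sg l)) \<le> (\<Sum>l=1..j. phat (sg l)) + eps / 2"
    unfolding X_def by (simp add: sum_subtractf)
qed

text \<open>The lexicographic maximizer is described by its prefix sums in priority order: each
  attains the bound of \<open>ball_set_prefix_sum_le\<close>.\<close>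
definition greedy_prefix_sum :: "(nat \<Rightarrow> real) \<Rightarrow> real \<Rightarrow> (nat \<Rightarrow> nat) \<Rightarrow> nat \<Rightarrow> real" where
  "greedy_prefix_sum phat eps sg j = (if j = 0 then 0 else min 1 ((\<Sum>l=1..j. phat (sg l)) + eps / 2))"

definition lex_greedy :: "nat \<Rightarrow> (nat \<Rightarrow> real) \<Rightarrow> real \<Rightarrow> (nat \<Rightarrow> nat) \<Rightarrow> nat \<Rightarrow> real" where
  "lex_greedy m phat eps sg i =
     (let l = the_inv_into {1..m} sg i
      in greedy_prefix_sum phat eps sg l - greedy_prefix_sum phat eps sg (l - 1))"

lemma lex_greedy_apply:
  assumes "bij_betw sg {1..m} {1..m}" and "l \<in> {1..m}"
  shows "lex_greedy m phat eps sg (sg l) = greedy_prefix_sum phat eps sg l - greedy_prefix_sum phat eps sg (l - 1)"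
  unfolding lex_greedy_def Let_def using the_inv_into_f_f[OF bij_betw_imp_inj_on[OF assms(1)] assms(2)]
  by simp

lemma lex_greedy_prefix_sum:
  assumes "bij_betw sg {1..m} {1..m}" and "j \<le> m"
  shows "(\<Sum>l=1..j. lex_greedy m phat eps sg (sg l)) = greedy_prefix_sum phat eps sg j"
  using assms(2) by (induction j) (simp_all add: lex_greedy_apply[OF assms(1)] greedy_prefix_sum_def)

lemma ball_set_prefix_sum_le_greedy:
  assumes "bij_betw sg {1..m} {1..m}" and "q \<in> ball_set m phat eps" and "prob_vec m phat"
    and "j \<le> m"
  shows "(\<Sum>l=1..j. q (sg l)) \<le> greedy_prefix_sum phat eps sg j"
  using ball_set_prefix_sum_le[OF assms] by (simp add: greedy_prefix_sum_def)

lemma greedy_prefix_sum_mono: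
  assumes "bij_betw sg {1..m} {1..m}" and "prob_vec m phat" and "0 \<le> eps" and "Suc j \<le> m"
  shows "greedy_prefix_sum phat eps sg j \<le> greedy_prefix_sum phat eps sg (Suc j)"
proof -
  have phat_nonneg: "0 \<le> phat (sg l)" if "l \<in> {1..m}" for l
    using assms(2) bij_betw_apply[OF assms(1) that] by (auto simp: prob_vec_def)
  have "0 \<le> (\<Sum>l=1..j. phat (sg l))"
    by (rule sum_nonneg) (use phat_nonneg assms(4) in auto)
  moreover have "0 \<le> phat (sg (Suc j))"
    using phat_nonneg assms(4) by auto
  ultimately show ?thesis
    using \<open>0 \<le> eps\<close> unfolding greedy_prefix_sum_def by (cases "j = 0") (simp_all add: min_def)
qed

lemma prob_vec_lex_greedy:
  assumes sg: "bij_betw sg {1..m} {1..m}" and phat: "prob_vec m phat" and "0 \<le> eps"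
  shows "prob_vec m (lex_greedy m phat eps sg)"
proof -
  let ?G = "greedy_prefix_sum phat eps sg" and ?q = "lex_greedy m phat eps sg"
  have "0 \<le> ?q i" if "i \<in> {1..m}" for i
  proof -
    have "i \<in> sg ` {1..m}"
      using that bij_betw_imp_surj_on[OF sg] by simp
    then obtain l where l: "l \<in> {1..m}" "i = sg l"
      by blast
    have "?G (l - 1) \<le> ?G (Suc (l - 1))"
      by (rule greedy_prefix_sum_mono[OF sg phat \<open>0 \<le> eps\<close>]) (use l in auto)
    then show ?thesis
      using l lex_greedy_apply[OF sg l(1)] by simp
  qed
  moreover have "(\<Sum>i=1..m. ?q i) = ?G m"
    using sum.reindex_bij_betw[OF sg, of ?q] lex_greedy_prefix_sum[OF sg order_refl] by simp
  moreover have "(\<Sum>l=1..m. phat (sg l)) = 1"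
    using phat sum.reindex_bij_betw[OF sg, of phat] unfolding prob_vec_def by simp
  moreover have "1 \<le> m"
    using phat unfolding prob_vec_def by (cases m) auto
  ultimately show ?thesis
    using \<open>0 \<le> eps\<close> unfolding prob_vec_def greedy_prefix_sum_def by simp
qed

lemma lex_greedy_in_ball_set:
  assumes sg: "bij_betw sg {1..m} {1..m}" and phat: "prob_vec m phat" and "0 \<le> eps"
  shows "lex_greedy m phat eps sg \<in> ball_set m phat eps"
proof -
  let ?G = "greedy_prefix_sum phat eps sg" and ?q = "lex_greedy m phat eps sg"
  define P where "P j = (\<Sum>l=1..j. phat (sg l))" for j
  have reindex: "(\<Sum>i=1..m. f i) = (\<Sum>l=1..m. f (sg l))" for f :: "nat \<Rightarrow> real"
    by (rule sum.reindex_bij_betw[OF sg, symmetric])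
  have phat_nonneg: "0 \<le> phat (sg l)" if "l \<in> {1..m}" for l
    using phat bij_betw_apply[OF sg that] by (auto simp: prob_vec_def)
  have "P m = 1"
    using phat reindex[of phat] unfolding prob_vec_def P_def by simp
  have "1 \<le> m"
    using phat unfolding prob_vec_def by (cases m) auto
  have P_Suc: "P (Suc j) = P j + phat (sg (Suc j))" for j
    by (simp add: P_def)
  have P_mono: "P j \<le> P k" if "j \<le> k" "k \<le> m" for j k
    unfolding P_def by (rule sum_mono2) (use that phat_nonneg in auto)
  text \<open>The excess \<open>E j = ?G j - P j\<close> rises to at most \<open>\<epsilon>/2\<close> at \<open>j = 1\<close> and then decreases
    to \<open>0\<close>, so the \<open>\<ell>\<^sub>1\<close>-distance of \<open>?q\<close> to \<open>phat\<close> telescopes to \<open>2 E 1\<close>.\<close>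
  define E where "E j = ?G j - P j" for j
  have E_pos: "E n = min (1 - P n) (eps / 2)" if "1 \<le> n" for n
    using that by (simp add: E_def greedy_prefix_sum_def P_def min_def)
  have E_0: "E 0 = 0"
    by (simp add: E_def greedy_prefix_sum_def P_def)
  have E_m: "E m = 0"
    using E_pos[OF \<open>1 \<le> m\<close>] \<open>P m = 1\<close> \<open>0 \<le> eps\<close> by simp
  have E_1: "0 \<le> E 1" "E 1 \<le> eps / 2"
    using E_pos[of 1] P_mono[of 1 m] \<open>1 \<le> m\<close> \<open>P m = 1\<close> \<open>0 \<le> eps\<close>
      min.cobounded2[of "1 - P 1" "eps / 2"] by simp_all
  have E_dec: "E (Suc n) \<le> E n" if "1 \<le> n" "Suc n \<le> m" for n
  proof -
    have "min (1 - P (Suc n)) (eps / 2) \<le> min (1 - P n) (eps / 2)"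
      by (rule min.mono) (use P_mono[of n "Suc n"] that in simp_all)
    then show ?thesis
      using E_pos[of n] E_pos[of "Suc n"] that by simp
  qed
  have q_diff: "?q (sg l) - phat (sg l) = E l - E (l - 1)" if "l \<in> {1..m}" for l
    using lex_greedy_apply[OF sg that] P_Suc[of "l - 1"] that unfolding E_def by simp
  have telescope: "(\<Sum>l=1..n. \<bar>E l - E (l - 1)\<bar>) = 2 * E 1 - E n" if "1 \<le> n" "n \<le> m" for n
    using that
  proof (induction n)
    case (Suc n)
    show ?case
    proof (cases "n = 0")
      case True
      then show ?thesis using E_0 E_1 by simp
    next
      case False
      then show ?thesis using Suc E_dec[of n] by simp
    qed
  qed simp
  have "(\<Sum>i=1..m. \<bar>?q i - phat i\<bar>) = (\<Sum>l=1..m. \<bar>E l - E (l - 1)\<bar>)"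
    using reindex[of "\<lambda>i. \<bar>?q i - phat i\<bar>"] q_diff by simp
  also have "\<dots> \<le> eps"
    using telescope[OF \<open>1 \<le> m\<close> order_refl] E_m E_1 by simp
  finally show ?thesis
    using prob_vec_lex_greedy[OF assms] unfolding ball_set_def by simp
qed

lemma lex_maximizer_lex_greedy:
  assumes sg: "bij_betw sg {1..m} {1..m}" and phat: "prob_vec m phat" and "0 \<le> eps"
  shows "lex_maximizer m (ball_set m phat eps) sg (lex_greedy m phat eps sg)"
  unfolding lex_maximizer_def
proof (intro conjI ballI lex_greedy_in_ball_set[OF assms])
  fix q assume q: "q \<in> ball_set m phat eps"
  let ?g = "lex_greedy m phat eps sg"
  show "lex_le (prio_vec m sg q) (prio_vec m sg ?g)"
  proof (cases "\<forall>l\<in>{1..m}. q (sg l) = ?g (sg l)")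
    case True
    then have "prio_vec m sg q = prio_vec m sg ?g"
      unfolding prio_vec_def by (intro map_cong) auto
    then show ?thesis
      unfolding lex_le_def by blast
  next
    case False
    text \<open>At the first coordinate where \<open>q\<close> differs, the prefix-sum bound forces \<open>q\<close> below.\<close>
    define k where "k = (LEAST l. l \<in> {1..m} \<and> q (sg l) \<noteq> ?g (sg l))"
    have k: "k \<in> {1..m}" "q (sg k) \<noteq> ?g (sg k)"
      using LeastI_ex[of "\<lambda>l. l \<in> {1..m} \<and> q (sg l) \<noteq> ?g (sg l)"] False unfolding k_def by blast+
    have below: "q (sg l) = ?g (sg l)" if "1 \<le> l" "l < k" for l
      using not_less_Least[of l "\<lambda>l. l \<in> {1..m} \<and> q (sg l) \<noteq> ?g (sg l)"] that k(1)
      unfolding k_def[symmetric] by auto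
    obtain k' where k': "k = Suc k'"
      using k(1) by (cases k) auto
    have "take k' (prio_vec m sg q) = take k' (prio_vec m sg ?g)"
      using k(1) k' below by (simp add: take_prio_vec del: upt_Suc)
    moreover have "(\<Sum>l=1..k. q (sg l)) \<le> (\<Sum>l=1..k. ?g (sg l))"
      using ball_set_prefix_sum_le_greedy[OF sg q phat] lex_greedy_prefix_sum[OF sg] k(1) by simp
    then have "q (sg k) < ?g (sg k)"
      using k(2) below k' by (simp add: sum.cong[of "{1..k'}" _ "\<lambda>l. q (sg l)" "\<lambda>l. ?g (sg l)"])
    then have "prio_vec m sg q ! k' < prio_vec m sg ?g ! k'"
      using k(1) k' by (simp add: prio_vec_nth)
    ultimately show ?thesis
      using k(1) k' unfolding lex_le_def prio_vec_length by fastforce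
  qed
qed

text \<open>Lexicographic maximizers are unique on \<open>{1..m}\<close>, so every one of them has the prefix
  sums of the greedy vector.\<close>
lemma lex_maximizer_prefix_sum_ge:
  assumes sg: "bij_betw sg {1..m} {1..m}" and phat: "prob_vec m phat" and "0 \<le> eps"
    and max: "lex_maximizer m (ball_set m phat eps) sg p"
    and "q \<in> ball_set m phat eps" and "j \<le> m"
  shows "(\<Sum>l=1..j. q (sg l)) \<le> (\<Sum>l=1..j. p (sg l))"
proof -
  let ?g = "lex_greedy m phat eps sg"
  have "prio_vec m sg p = prio_vec m sg ?g"
    using max lex_maximizer_lex_greedy[OF assms(1-3)] lex_greedy_in_ball_set[OF assms(1-3)]
    unfolding lex_maximizer_def by (intro lex_le_antisym) (auto simp: prio_vec_length)
  then have p_eq: "p (sg l) = ?g (sg l)" if "l \<in> {1..m}" for l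
    using prio_vec_nth[of "l - 1" m sg p] prio_vec_nth[of "l - 1" m sg ?g] that by fastforce
  have "(\<Sum>l=1..j. q (sg l)) \<le> greedy_prefix_sum phat eps sg j"
    by (rule ball_set_prefix_sum_le_greedy[OF sg \<open>q \<in> _\<close> phat \<open>j \<le> m\<close>])
  also have "\<dots> = (\<Sum>l=1..j. p (sg l))"
    using lex_greedy_prefix_sum[OF sg \<open>j \<le> m\<close>] p_eq \<open>j \<le> m\<close> by simp
  finally show ?thesis .
qed

lemma p_tilde_lex_maximizer:
  assumes "bij_betw (ord s) {1..m} {1..m}" and "prob_vec m phat" and "0 \<le> eps"
  shows "lex_maximizer m (ball_set m phat eps) (ord s) (p_tilde m (ball_set m phat eps) ord s)"
  unfolding p_tilde_def
  by (rule someI[where P = "lex_maximizer m (ball_set m phat eps) (ord s)"],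
      rule lex_maximizer_lex_greedy[OF assms])

section \<open>Admitting the same load from dominating arrival streams\<close>

text \<open>Abel summation.\<close>
lemma weighted_sum_le_of_prefix_sum_le:
  fixes w u v :: "nat \<Rightarrow> real"
  assumes w_mono: "\<And>l. 1 \<le> l \<Longrightarrow> Suc l \<le> n \<Longrightarrow> w (Suc l) \<le> w l"
    and prefix: "\<And>j. j \<le> n \<Longrightarrow> (\<Sum>l=1..j. u l) \<le> (\<Sum>l=1..j. v l)"
    and total: "(\<Sum>l=1..n. u l) = (\<Sum>l=1..n. v l)"
  shows "(\<Sum>l=1..n. w l * u l) \<le> (\<Sum>l=1..n. w l * v l)"
proof -
  define D where "D j = (\<Sum>l=1..j. v l - u l)" for j
  have D_nonneg: "0 \<le> D j" if "j \<le> n" for j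
    using prefix[OF that] unfolding D_def by (simp add: sum_subtractf)
  have partial: "w j * D j \<le> (\<Sum>l=1..j. w l * (v l - u l))" if "j \<le> n" for j
    using that
  proof (induction j)
    case (Suc j)
    have "w (Suc j) * D j \<le> w j * D j"
      using w_mono[of j] Suc.prems D_nonneg[of j]
      by (cases "j = 0") (auto simp: D_def intro!: mult_right_mono)
    then have "w (Suc j) * D (Suc j) \<le> w j * D j + w (Suc j) * (v (Suc j) - u (Suc j))"
      by (simp add: D_def distrib_left)
    also have "\<dots> \<le> (\<Sum>l=1..Suc j. w l * (v l - u l))"
      using Suc by simp
    finally show ?case .
  qed (simp add: D_def)
  have "D n = 0"
    using total unfolding D_def by (simp add: sum_subtractf)
  then show ?thesis
    using partial[of n] by (simp add: right_diff_distrib sum_subtractf)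
qed

lemma greedy_fill_prefix_sum:
  fixes cap :: "nat \<Rightarrow> real"
  assumes "\<And>l. 0 \<le> cap l" and "0 \<le> B"
  shows "(\<Sum>l=1..j. max 0 (min (cap l) (B - (\<Sum>k=1..l - 1. cap k))))
    = min B (\<Sum>l=1..j. cap l)"
proof (induction j)
  case (Suc j)
  then show ?case
    using assms(1)[of "Suc j"] by (simp add: min_def max_def)
qed (simp add: \<open>0 \<le> B\<close>)

definition indep_subset_prob :: "'a set \<Rightarrow> ('a \<Rightarrow> real) \<Rightarrow> 'a set \<Rightarrow> real" where
  "indep_subset_prob A x a = (\<Prod>i\<in>a. x i) * (\<Prod>i\<in>A - a. 1 - x i)"

lemma sum_indep_subset_prob:
  assumes "finite A"
  shows "(\<Sum>a\<in>Pow A. indep_subset_prob A x a) = 1"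
  using prod_add[OF assms, of x "\<lambda>i. 1 - x i"] unfolding indep_subset_prob_def by simp

lemma indep_subset_prob_marginal:
  assumes "finite A" and "i \<in> A"
  shows "(\<Sum>a\<in>Pow A. if i \<in> a then indep_subset_prob A x a else 0) = x i"
proof -
  define y where "y j = (if j = i then 0 else 1 - x j)" for j
  have "(\<Sum>a\<in>Pow A. if i \<in> a then indep_subset_prob A x a else 0)
      = (\<Sum>a\<in>Pow A. (\<Prod>j\<in>a. x j) * (\<Prod>j\<in>A - a. y j))"
  proof (rule sum.cong[OF refl])
    fix a assume "a \<in> Pow A"
    show "(if i \<in> a then indep_subset_prob A x a else 0) = (\<Prod>j\<in>a. x j) * (\<Prod>j\<in>A - a. y j)"
    proof (cases "i \<in> a")
      case True
      then have "(\<Prod>j\<in>A - a. y j) = (\<Prod>j\<in>A - a. 1 - x j)"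
        by (intro prod.cong) (auto simp: y_def)
      then show ?thesis
        using True by (simp add: indep_subset_prob_def)
    next
      case False
      then have "(\<Prod>j\<in>A - a. y j) = 0"
        using assms by (intro prod_zero) (auto simp: y_def)
      then show ?thesis
        using False by simp
    qed
  qed
  also have "\<dots> = (\<Prod>j\<in>A. x j + y j)"
    by (rule prod_add[OF assms(1), symmetric])
  also have "\<dots> = (x i + y i) * (\<Prod>j\<in>A - {i}. x j + y j)"
    by (rule prod.remove[OF assms])
  also have "(\<Prod>j\<in>A - {i}. x j + y j) = 1"
    by (rule prod.neutral) (auto simp: y_def)
  finally show ?thesis
    by (simp add: y_def)
qed

lemma indep_subset_prob_nonneg:
  assumes "\<And>i. i \<in> A \<Longrightarrow> 0 \<le> x i \<and> x i \<le> 1" and "a \<subseteq> A"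
  shows "0 \<le> indep_subset_prob A x a"
  unfolding indep_subset_prob_def using assms by (intro mult_nonneg_nonneg prod_nonneg) auto

text \<open>The admitted rates \<open>y i * lam' i\<close> fill the total admitted rate greedily in priority
  order; by Abel summation this does not lose reward.\<close>
lemma admission_coupling:
  fixes lam lam' x r :: "nat \<Rightarrow> real"
  assumes sg: "bij_betw sg {1..m} {1..m}"
    and r_order: "\<And>k l. 1 \<le> k \<Longrightarrow> k \<le> l \<Longrightarrow> l \<le> m \<Longrightarrow> r (sg l) \<le> r (sg k)"
    and lam: "\<And>i. i \<in> {1..m} \<Longrightarrow> 0 \<le> lam i" and lam': "\<And>i. i \<in> {1..m} \<Longrightarrow> 0 \<le> lam' i"
    and prefix: "\<And>j. j \<le> m \<Longrightarrow> (\<Sum>l=1..j. lam (sg l)) \<le> (\<Sum>l=1..j. lam' (sg l))"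
    and x: "\<And>i. i \<in> {1..m} \<Longrightarrow> 0 \<le> x i \<and> x i \<le> 1"
  obtains y where "\<And>i. i \<in> {1..m} \<Longrightarrow> 0 \<le> y i \<and> y i \<le> 1"
    and "(\<Sum>i=1..m. y i * lam' i) = (\<Sum>i=1..m. x i * lam i)"
    and "(\<Sum>i=1..m. x i * lam i * r i) \<le> (\<Sum>i=1..m. y i * lam' i * r i)"
proof -
  have reindex: "(\<Sum>i=1..m. f i) = (\<Sum>l=1..m. f (sg l))" for f :: "nat \<Rightarrow> real"
    by (rule sum.reindex_bij_betw[OF sg, symmetric])
  have sg_in: "sg l \<in> {1..m}" if "l \<in> {1..m}" for l
    by (rule bij_betw_apply[OF sg that])
  define u where "u l = x (sg l) * lam (sg l)" for l
  define B where "B = (\<Sum>l=1..m. u l)"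
  define cap where "cap l = (if l \<in> {1..m} then lam' (sg l) else 0)" for l
  define v where "v l = max 0 (min (cap l) (B - (\<Sum>k=1..l - 1. cap k)))" for l
  define y where "y i = (if lam' i = 0 then 0 else v (the_inv_into {1..m} sg i) / lam' i)" for i
  have u_nonneg: "0 \<le> u l" and u_le: "u l \<le> lam (sg l)" if "l \<in> {1..m}" for l
    unfolding u_def using x[OF sg_in[OF that]] lam[OF sg_in[OF that]]
    by (simp_all add: mult_left_le_one_le)
  have "0 \<le> B"
    unfolding B_def by (rule sum_nonneg) (use u_nonneg in auto)
  have cap_prefix: "(\<Sum>l=1..j. cap l) = (\<Sum>l=1..j. lam' (sg l))" if "j \<le> m" for j
    using that by (intro sum.cong) (auto simp: cap_def)
  have u_prefix: "(\<Sum>l=1..j. u l) \<le> min B (\<Sum>l=1..j. cap l)" if "j \<le> m" for j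
  proof -
    have "(\<Sum>l=1..j. u l) \<le> (\<Sum>l=1..j. lam (sg l))"
      by (rule sum_mono) (use u_le that in auto)
    also have "\<dots> \<le> (\<Sum>l=1..j. cap l)"
      using prefix[OF that] cap_prefix[OF that] by simp
    finally have "(\<Sum>l=1..j. u l) \<le> (\<Sum>l=1..j. cap l)" .
    moreover have "0 \<le> (\<Sum>l=Suc j..m. u l)"
      by (rule sum_nonneg) (use u_nonneg in auto)
    ultimately show ?thesis
      using sum_split_at[OF that, of u] unfolding B_def by simp
  qed
  have v_prefix: "(\<Sum>l=1..j. v l) = min B (\<Sum>l=1..j. cap l)" for j
    unfolding v_def by (rule greedy_fill_prefix_sum) (use lam' sg_in \<open>0 \<le> B\<close> in \<open>auto simp: cap_def\<close>)
  have total: "(\<Sum>l=1..m. u l) = (\<Sum>l=1..m. v l)"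
    using u_prefix[of m] v_prefix[of m] unfolding B_def by simp
  have v_bounds: "0 \<le> v l" "v l \<le> lam' (sg l)" if "l \<in> {1..m}" for l
    using that lam'[OF sg_in[OF that]] by (auto simp: v_def cap_def)
  have y_v: "y (sg l) * lam' (sg l) = v l" if "l \<in> {1..m}" for l
    using v_bounds[OF that] the_inv_into_f_f[OF bij_betw_imp_inj_on[OF sg] that]
    by (auto simp: y_def)
  show ?thesis
  proof
    fix i assume i: "i \<in> {1..m}"
    then have "i \<in> sg ` {1..m}"
      using bij_betw_imp_surj_on[OF sg] by simp
    then obtain l where l: "l \<in> {1..m}" "i = sg l"
      by blast
    show "0 \<le> y i \<and> y i \<le> 1"
      using v_bounds[OF l(1)] l the_inv_into_f_f[OF bij_betw_imp_inj_on[OF sg] l(1)] lam'[OF i]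
      by (auto simp: y_def divide_le_eq_1)
  next
    show "(\<Sum>i=1..m. y i * lam' i) = (\<Sum>i=1..m. x i * lam i)"
      using reindex[of "\<lambda>i. y i * lam' i"] reindex[of "\<lambda>i. x i * lam i"] total y_v
      by (simp add: u_def)
  next
    have "(\<Sum>l=1..m. r (sg l) * u l) \<le> (\<Sum>l=1..m. r (sg l) * v l)"
      using u_prefix v_prefix total r_order
      by (intro weighted_sum_le_of_prefix_sum_le) auto
    then show "(\<Sum>i=1..m. x i * lam i * r i) \<le> (\<Sum>i=1..m. y i * lam' i * r i)"
      using reindex[of "\<lambda>i. y i * lam' i * r i"] reindex[of "\<lambda>i. x i * lam i * r i"] y_v
      by (simp add: u_def mult.commute)
  qed
qed

lemma exists_policy_with_admit_prob:
  assumes "\<And>s i. s < S \<Longrightarrow> i \<in> {1..m} \<Longrightarrow> 0 \<le> Y s i \<and> Y s i \<le> 1"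
  obtains d where "valid_policy m S d" and "\<And>s i. i \<in> {1..m} \<Longrightarrow> admit_prob m d s i = Y s i"
proof
  define d where "d s a = (if a \<subseteq> {1..m} then indep_subset_prob {1..m} (Y s) a else 0)" for s a
  have "(\<Sum>a\<in>Pow {1..m}. d s a) = (\<Sum>a\<in>Pow {1..m}. indep_subset_prob {1..m} (Y s) a)" for s
    by (rule sum.cong) (auto simp: d_def)
  then show "valid_policy m S d"
    unfolding valid_policy_def using assms
    by (auto simp: sum_indep_subset_prob d_def intro!: indep_subset_prob_nonneg)
  fix s i assume "i \<in> {1..m}"
  have "admit_prob m d s i = (\<Sum>a\<in>Pow {1..m}. if i \<in> a then indep_subset_prob {1..m} (Y s) a else 0)"
    unfolding admit_prob_def by (rule sum.cong) (auto simp: d_def)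
  then show "admit_prob m d s i = Y s i"
    using indep_subset_prob_marginal[OF _ \<open>i \<in> {1..m}\<close>] by simp
qed

lemma exists_dominating_policy:
  assumes d: "valid_policy m S d"
    and sg: "\<And>s. s < S \<Longrightarrow> bij_betw (ord s) {1..m} {1..m}"
    and r_order: "\<And>s k l. s < S \<Longrightarrow> 1 \<le> k \<Longrightarrow> k \<le> l \<Longrightarrow> l \<le> m \<Longrightarrow> r (ord s l) s \<le> r (ord s k) s"
    and rates: "\<And>s i. s < S \<Longrightarrow> i \<in> {1..m} \<Longrightarrow> 0 \<le> Lam * p s i"
    and rates': "\<And>s i. s < S \<Longrightarrow> i \<in> {1..m} \<Longrightarrow> 0 \<le> Lam' * p' s i"
    and prefix: "\<And>s j. s < S \<Longrightarrow> j \<le> m \<Longrightarrow>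
      (\<Sum>l=1..j. Lam * p s (ord s l)) \<le> (\<Sum>l=1..j. Lam' * p' s (ord s l))"
  obtains d' where "valid_policy m S d'" and "birth_rate m S Lam' p' d' = birth_rate m S Lam p d"
    and "\<And>s. reward_rate m S r Lam p d s \<le> reward_rate m S r Lam' p' d' s"
proof -
  let ?x = "admit_prob m d"
  define good where "good s y \<longleftrightarrow> (\<forall>i\<in>{1..m}. 0 \<le> y i \<and> y i \<le> 1)
      \<and> (\<Sum>i=1..m. y i * (Lam' * p' s i)) = (\<Sum>i=1..m. ?x s i * (Lam * p s i))
      \<and> (\<Sum>i=1..m. ?x s i * (Lam * p s i) * r i s) \<le> (\<Sum>i=1..m. y i * (Lam' * p' s i) * r i s)"
    for s y
  have "\<exists>y. s < S \<longrightarrow> good s y" for s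
  proof (cases "s < S")
    case True
    obtain y where "\<And>i. i \<in> {1..m} \<Longrightarrow> 0 \<le> y i \<and> y i \<le> 1"
      "(\<Sum>i=1..m. y i * (Lam' * p' s i)) = (\<Sum>i=1..m. ?x s i * (Lam * p s i))"
      "(\<Sum>i=1..m. ?x s i * (Lam * p s i) * r i s) \<le> (\<Sum>i=1..m. y i * (Lam' * p' s i) * r i s)"
    proof (rule admission_coupling[OF sg[OF True], where r = "\<lambda>i. r i s" and x = "?x s"
          and lam = "\<lambda>i. Lam * p s i" and lam' = "\<lambda>i. Lam' * p' s i"])
      show "r (ord s l) s \<le> r (ord s k) s" if "1 \<le> k" "k \<le> l" "l \<le> m" for k l
        by (rule r_order[OF True that])
      show "0 \<le> Lam * p s i" "0 \<le> Lam' * p' s i" if "i \<in> {1..m}" for i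
        by (rule rates[OF True that], rule rates'[OF True that])
      show "(\<Sum>l=1..j. Lam * p s (ord s l)) \<le> (\<Sum>l=1..j. Lam' * p' s (ord s l))" if "j \<le> m" for j
        by (rule prefix[OF True that])
      show "0 \<le> ?x s i \<and> ?x s i \<le> 1" for i
        using admit_prob_bounds[OF d True] by blast
    qed blast
    then show ?thesis
      unfolding good_def by blast
  qed simp
  then obtain Y where Y: "\<And>s. s < S \<Longrightarrow> good s (Y s)"
    using choice[of "\<lambda>s y. s < S \<longrightarrow> good s y"] by blast
  have "\<And>s i. s < S \<Longrightarrow> i \<in> {1..m} \<Longrightarrow> 0 \<le> Y s i \<and> Y s i \<le> 1"
    using Y unfolding good_def by blast
  then obtain d' where "valid_policy m S d'" and x': "\<And>s i. i \<in> {1..m} \<Longrightarrow> admit_prob m d' s i = Y s i"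
    by (metis exists_policy_with_admit_prob)
  moreover have "birth_rate m S Lam' p' d' s = birth_rate m S Lam p d s" for s
  proof (cases "s < S")
    case True
    have "(\<Sum>i=1..m. Lam' * p' s i * admit_prob m d' s i) = (\<Sum>i=1..m. Y s i * (Lam' * p' s i))"
      by (intro sum.cong) (simp_all add: x')
    also have "\<dots> = (\<Sum>i=1..m. Lam * p s i * ?x s i)"
      using Y[OF True] unfolding good_def by (simp add: mult_ac)
    finally show ?thesis
      by (simp add: birth_rate_eq_admit_prob)
  qed (simp add: birth_rate_eq_admit_prob)
  moreover have "reward_rate m S r Lam p d s \<le> reward_rate m S r Lam' p' d' s" for s
  proof (cases "s < S")
    case True
    have "(\<Sum>i=1..m. Lam * p s i * r i s * ?x s i) \<le> (\<Sum>i=1..m. Y s i * (Lam' * p' s i) * r i s)"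
      using Y[OF True] unfolding good_def by (simp add: mult_ac)
    also have "\<dots> = (\<Sum>i=1..m. Lam' * p' s i * r i s * admit_prob m d' s i)"
      by (intro sum.cong) (simp_all add: x')
    finally show ?thesis
      using True by (simp add: reward_rate_eq_admit_prob)
  qed (simp add: reward_rate_eq_admit_prob)
  ultimately show ?thesis
    using that by blast
qed

lemma reward_rate_le:
  assumes "valid_policy m S d" and "0 \<le> Lam"
    and "\<And>i. s < S \<Longrightarrow> i \<in> {1..m} \<Longrightarrow> 0 \<le> p s i \<and> p s i \<le> 1"
  shows "reward_rate m S r Lam p d s \<le> (\<Sum>i=1..m. Lam * \<bar>r i s\<bar>)"
proof (cases "s < S")
  case True
  have "Lam * p s i * r i s * admit_prob m d s i \<le> Lam * \<bar>r i s\<bar>" if "i \<in> {1..m}" for i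
  proof -
    have "Lam * p s i * r i s * admit_prob m d s i \<le> Lam * \<bar>r i s\<bar> * (p s i * admit_prob m d s i)"
      using assms(2) assms(3)[OF True that] admit_prob_bounds[OF assms(1) True, of i]
      by (auto simp: mult_ac intro!: mult_left_mono mult_right_mono mult_nonneg_nonneg)
    also have "\<dots> \<le> Lam * \<bar>r i s\<bar>"
      using assms(2) assms(3)[OF True that] admit_prob_bounds[OF assms(1) True, of i]
      by (intro mult_right_le_one_le mult_le_one) auto
    finally show ?thesis .
  qed
  then have "(\<Sum>i=1..m. Lam * p s i * r i s * admit_prob m d s i) \<le> (\<Sum>i=1..m. Lam * \<bar>r i s\<bar>)"
    by (rule sum_mono)
  then show ?thesis
    using True by (simp add: reward_rate_eq_admit_prob)
qed (simp add: reward_rate_eq_admit_prob sum_nonneg assms(2))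

lemma valid_policy_admit_none: "valid_policy m S (\<lambda>s a. if a = {} then 1 else 0)"
  unfolding valid_policy_def by simp

lemma bdd_above_avg_reward:
  assumes "1 \<le> c" and "0 < mu" and "s0 \<le> S" and "0 \<le> Lam"
    and p: "\<And>s i. s < S \<Longrightarrow> i \<in> {1..m} \<Longrightarrow> 0 \<le> p s i \<and> p s i \<le> 1"
  shows "bdd_above ((\<lambda>d. avg_reward m S c mu r Lam p d s0) ` {d. valid_policy m S d})"
proof (rule bdd_aboveI)
  define K where "K = (\<Sum>s\<le>S. \<Sum>i=1..m. Lam * \<bar>r i s\<bar>)"
  fix x assume "x \<in> (\<lambda>d. avg_reward m S c mu r Lam p d s0) ` {d. valid_policy m S d}"
  then obtain d where d: "valid_policy m S d" and x: "x = avg_reward m S c mu r Lam p d s0"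
    by blast
  have births: "0 \<le> birth_rate m S Lam p d s" for s
    using d \<open>0 \<le> Lam\<close> p by (intro birth_rate_nonneg) auto
  have "avg_reward m S c mu r Lam p d s0 \<le> K"
  proof (rule avg_reward_le_bound[OF births \<open>1 \<le> c\<close> \<open>0 < mu\<close> \<open>s0 \<le> S\<close>])
    fix i assume "i \<le> S"
    have "reward_rate m S r Lam p d i \<le> (\<Sum>k=1..m. Lam * \<bar>r k i\<bar>)"
      using reward_rate_le[OF d \<open>0 \<le> Lam\<close>] p by blast
    also have "\<dots> \<le> K"
      unfolding K_def using \<open>i \<le> S\<close> \<open>0 \<le> Lam\<close>
      by (intro member_le_sum[where f = "\<lambda>s. \<Sum>k=1..m. Lam * \<bar>r k s\<bar>"]) (auto intro: sum_nonneg)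
    finally show "reward_rate m S r Lam p d i \<le> K" .
  qed
  then show "x \<le> K"
    using x by simp
qed

lemma opt_reward_le_of_dominated:
  assumes "1 \<le> c" and "0 < mu" and "s0 \<le> S" and "0 \<le> Lam'"
    and births: "\<And>d s. valid_policy m S d \<Longrightarrow> 0 \<le> birth_rate m S Lam p d s"
    and p': "\<And>s i. s < S \<Longrightarrow> i \<in> {1..m} \<Longrightarrow> 0 \<le> p' s i \<and> p' s i \<le> 1"
    and dominated: "\<And>d. valid_policy m S d \<Longrightarrow> \<exists>d'. valid_policy m S d'
       \<and> birth_rate m S Lam' p' d' = birth_rate m S Lam p d
       \<and> (\<forall>s. reward_rate m S r Lam p d s \<le> reward_rate m S r Lam' p' d' s)"
  shows "opt_reward m S c mu r Lam p s0 \<le> opt_reward m S c mu r Lam' p' s0"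
  unfolding opt_reward_def
proof (rule cSUP_mono)
  show "{d. valid_policy m S d} \<noteq> {}"
    using valid_policy_admit_none by blast
  show "bdd_above ((\<lambda>d. avg_reward m S c mu r Lam' p' d s0) ` {d. valid_policy m S d})"
    by (rule bdd_above_avg_reward[OF assms(1-4) p'])
  fix d assume "d \<in> {d. valid_policy m S d}"
  then obtain d' where "valid_policy m S d'" "birth_rate m S Lam' p' d' = birth_rate m S Lam p d"
    "\<And>s. reward_rate m S r Lam p d s \<le> reward_rate m S r Lam' p' d' s"
    using dominated by blast
  then show "\<exists>d'\<in>{d. valid_policy m S d}.
      avg_reward m S c mu r Lam p d s0 \<le> avg_reward m S c mu r Lam' p' d' s0"
    using births \<open>d \<in> _\<close> \<open>1 \<le> c\<close> \<open>0 < mu\<close> \<open>s0 \<le> S\<close> by (blast intro: avg_reward_mono)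
qed

lemma ball_set_bounds:
  assumes "q \<in> ball_set m phat eps" and "i \<in> {1..m}"
  shows "0 \<le> q i \<and> q i \<le> 1"
proof -
  have "\<forall>i\<in>{1..m}. 0 \<le> q i" and "(\<Sum>i=1..m. q i) = 1"
    using assms(1) unfolding ball_set_def prob_vec_def by simp_all
  moreover from this have "q i \<le> (\<Sum>i=1..m. q i)"
    using assms(2) by (intro member_le_sum) auto
  ultimately show ?thesis
    using assms(2) by simp
qed

lemma p_tilde_dominates:
  fixes ord :: "nat \<Rightarrow> nat \<Rightarrow> nat"
  assumes ord_bij: "\<And>s. s < S \<Longrightarrow> bij_betw (ord s) {1..m} {1..m}"
    and r_order: "\<And>s k l. s < S \<Longrightarrow> 1 \<le> k \<Longrightarrow> k \<le> l \<Longrightarrow> l \<le> m \<Longrightarrow> r (ord s l) s \<le> r (ord s k) s"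
    and phat: "prob_vec m phat" and eps: "0 \<le> eps"
    and Lam: "0 \<le> Lam" "Lam \<le> b" and p_in: "\<And>s. s < S \<Longrightarrow> p s \<in> ball_set m phat eps"
    and d: "valid_policy m S d"
  shows "\<exists>d'. valid_policy m S d' \<and> birth_rate m S b (p_tilde m (ball_set m phat eps) ord) d' = birth_rate m S Lam p d
    \<and> (\<forall>s. reward_rate m S r Lam p d s \<le> reward_rate m S r b (p_tilde m (ball_set m phat eps) ord) d' s)"
proof -
  let ?pt = "p_tilde m (ball_set m phat eps) ord"
  have pt_max: "lex_maximizer m (ball_set m phat eps) (ord s) (?pt s)" if "s < S" for s
    by (rule p_tilde_lex_maximizer[where ord = ord and s = s, OF ord_bij[OF that] phat eps])
  then have pt_bounds: "0 \<le> ?pt s i \<and> ?pt s i \<le> 1" if "s < S" "i \<in> {1..m}" for s i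
    using that ball_set_bounds unfolding lex_maximizer_def by blast
  have p_bounds: "0 \<le> p s i \<and> p s i \<le> 1" if "s < S" "i \<in> {1..m}" for s i
    using p_in[OF that(1)] that(2) ball_set_bounds by blast
  obtain d' where "valid_policy m S d'" "birth_rate m S b ?pt d' = birth_rate m S Lam p d"
    "\<And>s. reward_rate m S r Lam p d s \<le> reward_rate m S r b ?pt d' s"
  proof (rule exists_dominating_policy[where ord = ord and r = r and Lam' = b and p' = ?pt,
        OF d ord_bij r_order])
    show "0 \<le> Lam * p s i" "0 \<le> b * ?pt s i" if "s < S" "i \<in> {1..m}" for s i
      using Lam p_bounds[OF that] pt_bounds[OF that] by auto
    fix s j assume "s < S" "j \<le> m"
    have "(\<Sum>l=1..j. Lam * p s (ord s l)) = Lam * (\<Sum>l=1..j. p s (ord s l))"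
      by (simp add: sum_distrib_left)
    also have "\<dots> \<le> Lam * (\<Sum>l=1..j. ?pt s (ord s l))"
      using lex_maximizer_prefix_sum_ge[OF ord_bij[OF \<open>s < S\<close>] phat eps]
        pt_max[OF \<open>s < S\<close>] p_in[OF \<open>s < S\<close>] \<open>j \<le> m\<close> Lam(1)
      by (intro mult_left_mono) auto
    also have "\<dots> \<le> b * (\<Sum>l=1..j. ?pt s (ord s l))"
      using pt_bounds[OF \<open>s < S\<close>] bij_betw_apply[OF ord_bij[OF \<open>s < S\<close>]] \<open>j \<le> m\<close> Lam(2)
      by (intro mult_right_mono sum_nonneg) auto
    finally show "(\<Sum>l=1..j. Lam * p s (ord s l)) \<le> (\<Sum>l=1..j. b * ?pt s (ord s l))"
      by (simp add: sum_distrib_left)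
  qed blast+
  then show ?thesis by blast
qed

theorem theorem1:
  fixes m S c :: nat and mu Lmin Lmax a b eps :: real
    and r :: "nat \<Rightarrow> nat \<Rightarrow> real" and phat :: "nat \<Rightarrow> real"
    and ord :: "nat \<Rightarrow> nat \<Rightarrow> nat"
  assumes c_pos: "1 \<le> c" and mu_pos: "0 < mu"
    and Lmin_pos: "0 < Lmin" and I_sub: "Lmin \<le> a" "a \<le> b" "b \<le> Lmax"
    and phat: "prob_vec m phat" and eps: "0 \<le> eps"
    and ord_bij: "\<And>s. s \<le> S \<Longrightarrow> bij_betw (ord s) {1..m} {1..m}"
    and sigma_order: "\<And>s k l. s \<le> S \<Longrightarrow> 1 \<le> k \<Longrightarrow> k \<le> l \<Longrightarrow> l \<le> m \<Longrightarrow>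
                         r (ord s l) s \<le> r (ord s k) s"
  shows "in_class m S {a..b} (ball_set m phat eps) b (p_tilde m (ball_set m phat eps) ord)
    \<and> (\<forall>Lam p. in_class m S {a..b} (ball_set m phat eps) Lam p \<longrightarrow>
         (\<forall>s0\<le>S. opt_reward m S c mu r Lam p s0
                  \<le> opt_reward m S c mu r b (p_tilde m (ball_set m phat eps) ord) s0))"
proof (intro conjI allI impI)
  let ?P = "ball_set m phat eps" and ?pt = "p_tilde m (ball_set m phat eps) ord"
  have pt_in: "?pt s \<in> ?P" if "s \<le> S" for s
    using p_tilde_lex_maximizer[where ord = ord and s = s, OF ord_bij[OF that] phat eps] unfolding lex_maximizer_def by blast
  then show "in_class m S {a..b} ?P b ?pt"
    unfolding in_class_def using I_sub by auto
  fix Lam p s0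
  assume "in_class m S {a..b} ?P Lam p" and "s0 \<le> S"
  then have Lam: "0 \<le> Lam" "Lam \<le> b" and p_in: "\<And>s. s \<le> S \<Longrightarrow> p s \<in> ?P"
    using Lmin_pos I_sub unfolding in_class_def by auto
  show "opt_reward m S c mu r Lam p s0 \<le> opt_reward m S c mu r b ?pt s0"
  proof (rule opt_reward_le_of_dominated[OF c_pos mu_pos \<open>s0 \<le> S\<close>])
    show "0 \<le> b"
      using Lam by simp
    show "0 \<le> birth_rate m S Lam p d s" if "valid_policy m S d" for d s
      using that Lam(1) ball_set_bounds[OF p_in] by (intro birth_rate_nonneg) auto
    show "0 \<le> ?pt s i \<and> ?pt s i \<le> 1" if "s < S" "i \<in> {1..m}" for s i
      using ball_set_bounds[OF pt_in] that by simp
    show "\<exists>d'. valid_policy m S d' \<and> birth_rate m S b ?pt d' = birth_rate m S Lam p d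
        \<and> (\<forall>s. reward_rate m S r Lam p d s \<le> reward_rate m S r b ?pt d' s)"
      if "valid_policy m S d" for d
      using ord_bij sigma_order p_in
      by (intro p_tilde_dominates[OF _ _ phat eps Lam _ that]) auto
  qed
qed

end
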